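(* Let $k\ge 6$ be an even integer with $k\equiv 0\pmod 3$, let $\mathcal{N}=\{0,1,\dots,2k-1\}$ and let $\mathcal{R}_1=\{R\in\binom{\mathcal{N}}{k}:\sum_{x\in R}x\equiv 1\pmod 3\}$. Then every subset $X\subset\mathcal{N}$ with $1\le |X|\le k-2$ belongs to $\mathcal{D}(\mathcal{R}_1)$, i.e. there exist $R,R'\in\mathcal{R}_1$ with $X=R\setminus R'$.
   Context: $\binom{\mathcal{N}}{k}$ is the family of all $k$-element subsets of $\mathcal{N}$. For a family $\mathcal{F}$, $\mathcal{D}(\mathcal{F})=\{F\setminus F' : F,F'\in\mathcal{F}\}$. *)

theory Defs
  imports Main
begin

definition diff_family :: "'a set set \<Rightarrow> 'a set set" where
  "diff_family F = {A - B | A B. A \<in> F \<and> B \<in> F}"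

end

theory Submission
  imports Defs
begin

text \<open>
  Let \<open>W\<close> be the complement of \<open>X\<close> in \<open>N\<close> and \<open>m = |X|\<close>. It suffices to find disjoint
  \<open>A, B \<subseteq> W\<close> with \<open>|A| = k - m\<close>, \<open>|B| = m\<close>, \<open>\<Sum>A \<equiv> 1 - \<Sum>X\<close> and \<open>\<Sum>B \<equiv> \<Sum>X\<close> (mod 3):
  then \<open>R = X \<union> A\<close> and \<open>R' = A \<union> B\<close> lie in \<open>R\<^sub>1\<close> and \<open>X = R - R'\<close>.
  Residues are steered by small sets \<open>D\<close> whose \<open>d\<close>-element subsets realise every residue:
  one element of each residue class (\<open>d = 1\<close>), or two elements from each of two classes
  (\<open>d = 2\<close>). A set of prescribed size made of arbitrary elements outside \<open>D\<close> plus a suitable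
  \<open>d\<close>-subset of \<open>D\<close> then has any prescribed residue. Each residue class of \<open>N\<close> has \<open>2k/3\<close>
  elements and \<open>m \<le> k - 2\<close>, so \<open>W\<close> always contains two disjoint such sets, one for \<open>A\<close> and
  one for \<open>B\<close>; when \<open>m = 1\<close>, every class of \<open>W\<close> is large and both can be of the first kind.
\<close>

definition residue_complete :: "nat \<Rightarrow> nat set \<Rightarrow> bool" where
  "residue_complete d D \<longleftrightarrow> (\<forall>c. \<exists>E\<subseteq>D. card E = d \<and> (\<Sum>E) mod 3 = c mod 3)"

lemma residue_complete_singletons:
  assumes "a mod 3 = 0" "b mod 3 = 1" "c mod 3 = 2"
  shows "residue_complete 1 {a, b, c}"
  unfolding residue_complete_def
proof
  fix r :: nat
  have "r mod 3 = 0 \<or> r mod 3 = 1 \<or> r mod 3 = 2" by auto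
  then obtain e where "e \<in> {a, b, c}" "e mod 3 = r mod 3" using assms by (metis insertCI)
  then show "\<exists>E\<subseteq>{a, b, c}. card E = 1 \<and> (\<Sum>E) mod 3 = r mod 3"
    by (intro exI[of _ "{e}"]) auto
qed

lemma residue_complete_pairs:
  assumes "x1 \<noteq> x2" "y1 \<noteq> y2" "x1 mod 3 = x2 mod 3" "y1 mod 3 = y2 mod 3" "x1 mod 3 \<noteq> y1 mod 3"
  shows "residue_complete 2 {x1, x2, y1, y2}"
  unfolding residue_complete_def
proof
  fix r :: nat
  define a b c where "a = x1 mod 3" and "b = y1 mod 3" and "c = r mod 3"
  have "a = 0 \<or> a = 1 \<or> a = 2" "b = 0 \<or> b = 1 \<or> b = 2" "c = 0 \<or> c = 1 \<or> c = 2"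
    unfolding a_def b_def c_def by auto
  moreover have "a \<noteq> b" using assms(5) by (simp add: a_def b_def)
  ultimately have "(a + a) mod 3 = c \<or> (a + b) mod 3 = c \<or> (b + b) mod 3 = c"
    by auto
  moreover have "(x1 + x2) mod 3 = (a + a) mod 3" "(x1 + y1) mod 3 = (a + b) mod 3"
    "(y1 + y2) mod 3 = (b + b) mod 3"
    using assms(3,4) unfolding a_def b_def by (metis mod_add_eq)+
  ultimately have "(x1 + x2) mod 3 = r mod 3 \<or> (x1 + y1) mod 3 = r mod 3 \<or> (y1 + y2) mod 3 = r mod 3"
    unfolding c_def by argo
  moreover have "x1 \<noteq> y1" using assms(5) by auto
  ultimately obtain u v where "u \<noteq> v" "{u, v} \<subseteq> {x1, x2, y1, y2}" "(u + v) mod 3 = r mod 3"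
    using assms(1,2) by blast
  then show "\<exists>E\<subseteq>{x1, x2, y1, y2}. card E = 2 \<and> (\<Sum>E) mod 3 = r mod 3"
    by (intro exI[of _ "{u, v}"]) simp
qed

lemma subset_with_residue:
  assumes "finite S" "D \<subseteq> S" "residue_complete d D" "d \<le> t" "t \<le> d + card (S - D)"
  shows "\<exists>T\<subseteq>S. card T = t \<and> (\<Sum>T) mod 3 = r mod 3"
proof -
  have "t - d \<le> card (S - D)" using assms(5) by linarith
  then obtain T' where T': "T' \<subseteq> S - D" "card T' = t - d"
    by (meson obtain_subset_with_card_n)
  \<comment> \<open>\<open>2 * \<Sum>T'\<close> is \<open>- \<Sum>T'\<close> modulo 3\<close>
  obtain E where E: "E \<subseteq> D" "card E = d" "(\<Sum>E) mod 3 = (r + 2 * \<Sum>T') mod 3"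
    using assms(3) unfolding residue_complete_def by blast
  have fin: "finite E" "finite T'" using E(1) T'(1) assms(1,2) by (auto intro: finite_subset)
  have disj: "E \<inter> T' = {}" using E(1) T'(1) by blast
  have "(\<Sum>(E \<union> T')) mod 3 = ((\<Sum>E) mod 3 + \<Sum>T') mod 3"
    using fin disj by (simp add: sum.union_disjoint mod_add_left_eq)
  also have "\<dots> = (r + 2 * \<Sum>T' + \<Sum>T') mod 3" by (simp only: E(3) mod_add_left_eq)
  also have "r + 2 * \<Sum>T' + \<Sum>T' = r + (\<Sum>T') * 3" by simp
  also have "(r + (\<Sum>T') * 3) mod 3 = r mod 3" by (rule mod_mult_self1)
  finally have "(\<Sum>(E \<union> T')) mod 3 = r mod 3" .
  moreover have "card (E \<union> T') = t" using fin disj E(2) T'(2) assms(4) by (simp add: card_Un_disjoint)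
  moreover have "E \<union> T' \<subseteq> S" using E(1) T'(1) assms(2) by blast
  ultimately show ?thesis by blast
qed

definition residue_class :: "nat set \<Rightarrow> nat \<Rightarrow> nat set" where
  "residue_class S i = {x \<in> S. x mod 3 = i}"

lemma finite_residue_class [simp]: "finite S \<Longrightarrow> finite (residue_class S i)"
  by (simp add: residue_class_def)

lemma card_residue_class_Diff:
  assumes "finite S" "D \<subseteq> S"
  shows "card (residue_class (S - D) i) = card (residue_class S i) - card (residue_class D i)"
proof -
  have "residue_class (S - D) i = residue_class S i - residue_class D i"
    "residue_class D i \<subseteq> residue_class S i"
    using assms(2) by (auto simp: residue_class_def)
  moreover have "finite D" using assms finite_subset by blast
  ultimately show ?thesis by (simp add: card_Diff_subset)
qed

lemma card_residue_class_Diff_ge: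
  assumes "finite S" "D \<subseteq> S" "card (residue_class D i) \<le> d" "n + d \<le> card (residue_class S i)"
  shows "n \<le> card (residue_class (S - D) i)"
  using card_residue_class_Diff[OF assms(1,2), of i] assms(3,4) by linarith

lemma card_residue_class_atLeastLessThan:
  assumes "i < 3"
  shows "card (residue_class {0..<3 * n} i) = n"
proof -
  have "residue_class {0..<3 * n} i = (\<lambda>y. 3 * y + i) ` {0..<n}"
  proof (intro equalityI subsetI)
    fix x assume "x \<in> residue_class {0..<3 * n} i"
    then have "x < 3 * n" "x = 3 * (x div 3) + i"
      by (auto simp: residue_class_def)
    then show "x \<in> (\<lambda>y. 3 * y + i) ` {0..<n}" by (intro image_eqI[of _ _ "x div 3"]) auto
  qed (use assms in \<open>auto simp: residue_class_def\<close>)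
  moreover have "inj_on (\<lambda>y. 3 * y + i) {0..<n}" by (auto simp: inj_on_def)
  ultimately show ?thesis by (simp add: card_image)
qed

lemma exists_residue_complete_singletons:
  assumes "\<And>i. i < 3 \<Longrightarrow> residue_class S i \<noteq> {}"
  shows "\<exists>D\<subseteq>S. residue_complete 1 D \<and> card D \<le> 3 \<and> (\<forall>i. card (residue_class D i) \<le> 1)"
proof -
  have "residue_class S 0 \<noteq> {}" "residue_class S 1 \<noteq> {}" "residue_class S 2 \<noteq> {}"
    using assms by simp_all
  then obtain a b c where abc: "a \<in> residue_class S 0" "b \<in> residue_class S 1" "c \<in> residue_class S 2"
    by blast
  then have res: "a mod 3 = 0" "b mod 3 = 1" "c mod 3 = 2" by (simp_all add: residue_class_def)
  have "card (residue_class {a, b, c} i) \<le> 1" for i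
    using res by (auto simp: residue_class_def card_le_Suc0_iff_eq)
  moreover have "{a, b, c} \<subseteq> S" using abc by (simp add: residue_class_def)
  ultimately show ?thesis
    using residue_complete_singletons[OF res] by (intro exI[of _ "{a, b, c}"]) (auto simp: card_insert_le_m1)
qed

lemma exists_residue_complete_pairs:
  assumes "finite S" "a \<noteq> b" "2 \<le> card (residue_class S a)" "2 \<le> card (residue_class S b)"
  shows "\<exists>D\<subseteq>S. residue_complete 2 D \<and> card D \<le> 4 \<and> (\<forall>i. card (residue_class D i) \<le> 2)"
proof -
  obtain x1 x2 y1 y2 where xy: "{x1, x2} \<subseteq> residue_class S a" "x1 \<noteq> x2"
    "{y1, y2} \<subseteq> residue_class S b" "y1 \<noteq> y2"
    using assms(3,4) by (metis obtain_subset_with_card_n card_2_iff)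
  then have res: "x1 mod 3 = x2 mod 3" "y1 mod 3 = y2 mod 3" "x1 mod 3 \<noteq> y1 mod 3"
    using assms(2) by (auto simp: residue_class_def)
  let ?D = "{x1, x2, y1, y2}"
  have "residue_class ?D i \<subseteq> {x1, x2} \<or> residue_class ?D i \<subseteq> {y1, y2}" for i
    using res by (auto simp: residue_class_def)
  moreover have "card {u, v} \<le> 2" for u v :: nat
    by (simp add: card_insert_if)
  ultimately have "card (residue_class ?D i) \<le> 2" for i
    by (meson card_mono finite.emptyI finite.insertI order.trans)
  moreover have "?D \<subseteq> S" using xy by (auto simp: residue_class_def)
  moreover have "card ?D \<le> 4" by (simp add: card_insert_le_m1)
  ultimately show ?thesis
    using residue_complete_pairs[OF xy(2,4) res] by blast
qed

lemma card_residue_classes_sum: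
  assumes "finite S"
  shows "card S = (\<Sum>i\<in>{0, 1, 2}. card (residue_class S i))"
proof -
  have "S = (\<Union>i\<in>{0, 1, 2}. residue_class S i)"
    by (auto simp: residue_class_def)
  also have "card \<dots> = (\<Sum>i\<in>{0, 1, 2}. card (residue_class S i))"
    using assms by (intro card_UN_disjoint) (auto simp: residue_class_def)
  finally show ?thesis .
qed

definition disjoint_residue_complete_pair :: "nat set \<Rightarrow> nat \<Rightarrow> nat \<Rightarrow> bool" where
  "disjoint_residue_complete_pair W d1 d2 \<longleftrightarrow>
     (\<exists>D1 D2. D1 \<subseteq> W \<and> D2 \<subseteq> W \<and> D1 \<inter> D2 = {} \<and>
        residue_complete d1 D1 \<and> residue_complete d2 D2 \<and> card D1 \<le> d1 + 2 \<and> card D2 \<le> d2 + 2)"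

lemma disjoint_residue_complete_pair_singletons:
  assumes "finite W" "\<And>i. i < 3 \<Longrightarrow> 2 \<le> card (residue_class W i)"
  shows "disjoint_residue_complete_pair W 1 1"
proof -
  have "residue_class W i \<noteq> {}" if "i < 3" for i
    using assms(2)[OF that] by auto
  then obtain D1 where D1: "D1 \<subseteq> W" "residue_complete 1 D1" "card D1 \<le> 3"
    "\<forall>i. card (residue_class D1 i) \<le> 1"
    using exists_residue_complete_singletons[of W] by blast
  have "1 \<le> card (residue_class (W - D1) i)" if "i < 3" for i
    using card_residue_class_Diff_ge[OF assms(1) D1(1), of i 1 1] D1(4) assms(2)[OF that] by simp
  then have "residue_class (W - D1) i \<noteq> {}" if "i < 3" for i
    using that by fastforce
  then obtain D2 where D2: "D2 \<subseteq> W - D1" "residue_complete 1 D2" "card D2 \<le> 3"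
    using exists_residue_complete_singletons[of "W - D1"] by blast
  show ?thesis
    unfolding disjoint_residue_complete_pair_def
    using D1(1-3) D2 by (intro exI[of _ D1] exI[of _ D2]) auto
qed

lemma disjoint_residue_complete_pair_two_classes:
  assumes "finite W" "a \<noteq> b" "4 \<le> card (residue_class W a)" "4 \<le> card (residue_class W b)"
  shows "disjoint_residue_complete_pair W 2 2"
proof -
  have "2 \<le> card (residue_class W a)" "2 \<le> card (residue_class W b)" using assms(3,4) by simp_all
  then obtain D1 where D1: "D1 \<subseteq> W" "residue_complete 2 D1" "card D1 \<le> 4"
    "\<forall>i. card (residue_class D1 i) \<le> 2"
    using exists_residue_complete_pairs[OF assms(1,2)] by blast
  have rest: "2 \<le> card (residue_class (W - D1) a)" "2 \<le> card (residue_class (W - D1) b)"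
    using card_residue_class_Diff_ge[OF assms(1) D1(1), of _ 2 2] D1(4) assms(3,4) by simp_all
  have "finite (W - D1)" using assms(1) by simp
  then obtain D2 where D2: "D2 \<subseteq> W - D1" "residue_complete 2 D2" "card D2 \<le> 4"
    using exists_residue_complete_pairs[OF _ assms(2) rest] by blast
  show ?thesis
    unfolding disjoint_residue_complete_pair_def
    using D1(1-3) D2 by (intro exI[of _ D1] exI[of _ D2]) auto
qed

lemma disjoint_residue_complete_pair_all_classes:
  assumes "finite W" "\<And>i. i < 3 \<Longrightarrow> residue_class W i \<noteq> {}"
    "a \<noteq> b" "3 \<le> card (residue_class W a)" "3 \<le> card (residue_class W b)"
  shows "disjoint_residue_complete_pair W 2 1"
proof -
  obtain D2 where D2: "D2 \<subseteq> W" "residue_complete 1 D2" "card D2 \<le> 3"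
    "\<forall>i. card (residue_class D2 i) \<le> 1"
    using exists_residue_complete_singletons[of W] assms(2) by blast
  have rest: "2 \<le> card (residue_class (W - D2) a)" "2 \<le> card (residue_class (W - D2) b)"
    using card_residue_class_Diff_ge[OF assms(1) D2(1), of _ 1 2] D2(4) assms(4,5) by simp_all
  have "finite (W - D2)" using assms(1) by simp
  then obtain D1 where D1: "D1 \<subseteq> W - D2" "residue_complete 2 D1" "card D1 \<le> 4"
    using exists_residue_complete_pairs[OF _ assms(3) rest] by blast
  show ?thesis
    unfolding disjoint_residue_complete_pair_def
    using D1 D2(1-3) by (intro exI[of _ D1] exI[of _ D2]) auto
qed

lemma disjoint_residue_complete_pair_sparse_class:
  assumes "finite W" "{a, b, j} = {0, 1, 2}" "card (residue_class W j) \<le> 1"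
    "card (residue_class W a) + 4 \<le> card W" "card (residue_class W b) + 4 \<le> card W"
  shows "\<exists>d1 d2. d1 \<le> 2 \<and> d2 \<le> 2 \<and> disjoint_residue_complete_pair W d1 d2"
proof -
  have "card {a, b, j} = 3" using assms(2) by simp
  then have distinct: "a \<noteq> b" "a \<noteq> j" "b \<noteq> j" by (auto simp: card_insert_if split: if_splits)
  have "card W = (\<Sum>i\<in>{a, b, j}. card (residue_class W i))"
    using card_residue_classes_sum[OF assms(1)] by (simp only: assms(2))
  then have "card W = card (residue_class W a) + card (residue_class W b) + card (residue_class W j)"
    using distinct by simp
  then have big: "4 \<le> card (residue_class W a) + card (residue_class W j)"
      "4 \<le> card (residue_class W b) + card (residue_class W j)"
    using assms(4,5) by linarith+
  show ?thesis
  proof (cases "card (residue_class W j) = 0")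
    case True
    then have "disjoint_residue_complete_pair W 2 2"
      using disjoint_residue_complete_pair_two_classes[OF assms(1) distinct(1)] big by simp
    then show ?thesis by (intro exI[of _ 2]) simp
  next
    case False
    then have j: "card (residue_class W j) = 1" using assms(3) by simp
    have "residue_class W i \<noteq> {}" if "i < 3" for i
    proof -
      have "i = 0 \<or> i = 1 \<or> i = 2" using that by auto
      then have "i = a \<or> i = b \<or> i = j" using assms(2) by blast
      then have "0 < card (residue_class W i)" using j big by (elim disjE) simp_all
      then show ?thesis by (simp add: card_gt_0_iff)
    qed
    then have "disjoint_residue_complete_pair W 2 1"
      using disjoint_residue_complete_pair_all_classes[OF assms(1) _ distinct(1)] j big by simp
    then show ?thesis by (intro exI[of _ 2] exI[of _ 1]) simp
  qed
qed

lemma disjoint_residue_complete_pair_exists: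
  assumes "finite W" "\<And>i. i < 3 \<Longrightarrow> card (residue_class W i) + 4 \<le> card W"
  shows "\<exists>d1 d2. d1 \<le> 2 \<and> d2 \<le> 2 \<and> disjoint_residue_complete_pair W d1 d2"
proof (cases "\<forall>i<3. 2 \<le> card (residue_class W i)")
  case True
  then have "disjoint_residue_complete_pair W 1 1"
    using disjoint_residue_complete_pair_singletons[OF assms(1)] by blast
  then show ?thesis by (intro exI[of _ 1]) simp
next
  case False
  then obtain j where "j < 3" "card (residue_class W j) \<le> 1" by (auto simp: not_le)
  then consider "j = 0" | "j = 1" | "j = 2" by linarith
  then show ?thesis
  proof cases
    case 1
    show ?thesis by (rule disjoint_residue_complete_pair_sparse_class[of W 1 2 j])
      (use 1 assms \<open>card (residue_class W j) \<le> 1\<close> in auto)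
  next
    case 2
    show ?thesis by (rule disjoint_residue_complete_pair_sparse_class[of W 0 2 j])
      (use 2 assms \<open>card (residue_class W j) \<le> 1\<close> in auto)
  next
    case 3
    show ?thesis by (rule disjoint_residue_complete_pair_sparse_class[of W 0 1 j])
      (use 3 assms \<open>card (residue_class W j) \<le> 1\<close> in auto)
  qed
qed

lemma disjoint_subsets_with_residues:
  assumes "finite W" "disjoint_residue_complete_pair W d1 d2" "d1 \<le> a" "d2 \<le> b"
    "a + d2 + 4 \<le> card W" "a + b + 2 \<le> card W"
  shows "\<exists>A B. A \<subseteq> W \<and> B \<subseteq> W \<and> A \<inter> B = {} \<and> card A = a \<and> card B = b
    \<and> (\<Sum>A) mod 3 = r mod 3 \<and> (\<Sum>B) mod 3 = s mod 3"
proof -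
  obtain D1 D2 where D: "D1 \<subseteq> W" "D2 \<subseteq> W" "D1 \<inter> D2 = {}" "residue_complete d1 D1"
    "residue_complete d2 D2" "card D1 \<le> d1 + 2" "card D2 \<le> d2 + 2"
    using assms(2) unfolding disjoint_residue_complete_pair_def by blast
  have fin: "finite D1" "finite D2" using D(1,2) assms(1) by (auto intro: finite_subset)
  have "W - D2 - D1 = W - (D2 \<union> D1)" by blast
  then have "card (W - D2 - D1) = card W - card (D2 \<union> D1)"
    using D(1,2) fin by (simp add: card_Diff_subset)
  also have "card (D2 \<union> D1) = card D2 + card D1"
    using D(3) fin by (simp add: card_Un_disjoint Int_commute)
  finally have "card (W - D2 - D1) = card W - (card D2 + card D1)" .
  then have "a \<le> d1 + card (W - D2 - D1)" using D(6,7) assms(5) by linarith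
  moreover have "D1 \<subseteq> W - D2" using D(1,3) by blast
  ultimately obtain A where A: "A \<subseteq> W - D2" "card A = a" "(\<Sum>A) mod 3 = r mod 3"
    using subset_with_residue[of "W - D2" D1 d1 a r] D(4) assms(1,3) by blast
  have "W - A - D2 = W - (A \<union> D2)" by blast
  moreover have "finite (A \<union> D2)" "A \<union> D2 \<subseteq> W"
    using A(1) D(2) assms(1) by (auto intro: finite_subset)
  ultimately have "card (W - A - D2) = card W - card (A \<union> D2)"
    by (simp add: card_Diff_subset)
  also have "card (A \<union> D2) = card A + card D2"
    using A(1) fin(2) assms(1) by (intro card_Un_disjoint) (auto intro: finite_subset)
  finally have "card (W - A - D2) = card W - (card A + card D2)" .
  then have "b \<le> d2 + card (W - A - D2)" using A(2) D(7) assms(6) by linarith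
  moreover have "D2 \<subseteq> W - A" using A(1) D(2) by blast
  ultimately obtain B where B: "B \<subseteq> W - A" "card B = b" "(\<Sum>B) mod 3 = s mod 3"
    using subset_with_residue[of "W - A" D2 d2 b s] D(5) assms(1,4) by blast
  show ?thesis using A B by blast
qed

lemma diff_family_of_disjoint_completions:
  fixes N X A B :: "nat set"
  assumes "finite N" "X \<subseteq> N" "A \<subseteq> N - X" "B \<subseteq> N - X" "A \<inter> B = {}"
    "card X + card A = k" "card B = card X" "\<rho> < 3"
    "(\<Sum>A) mod 3 = (\<rho> + 2 * \<Sum>X) mod 3" "(\<Sum>B) mod 3 = (\<Sum>X) mod 3"
  shows "X \<in> diff_family {R. R \<subseteq> N \<and> card R = k \<and> (\<Sum>x\<in>R. x) mod 3 = \<rho>}"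
proof -
  have fin: "finite X" "finite A" "finite B"
    using assms(1-4) by (auto intro: finite_subset)
  have "(\<Sum>X + \<Sum>A) mod 3 = (\<Sum>X + (\<Sum>A) mod 3) mod 3"
    by (simp add: mod_add_right_eq)
  also have "\<dots> = (\<Sum>X + (\<rho> + 2 * \<Sum>X)) mod 3"
    by (simp only: assms(9) mod_add_right_eq)
  also have "\<Sum>X + (\<rho> + 2 * \<Sum>X) = \<rho> + \<Sum>X * 3" by simp
  also have "(\<rho> + \<Sum>X * 3) mod 3 = \<rho>" using assms(8) by simp
  finally have sum_XA: "(\<Sum>X + \<Sum>A) mod 3 = \<rho>" .
  have "(\<Sum>A + \<Sum>B) mod 3 = (\<Sum>X + \<Sum>A) mod 3"
    using assms(10) by (metis add.commute mod_add_right_eq)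
  then have sum_AB: "(\<Sum>A + \<Sum>B) mod 3 = \<rho>" using sum_XA by simp
  have disj: "X \<inter> A = {}" using assms(3) by blast
  have "X \<union> A \<subseteq> N \<and> card (X \<union> A) = k \<and> (\<Sum>x\<in>X \<union> A. x) mod 3 = \<rho>"
    using assms(2,3,6) fin disj sum_XA by (auto simp: card_Un_disjoint sum.union_disjoint)
  moreover have "A \<union> B \<subseteq> N \<and> card (A \<union> B) = k \<and> (\<Sum>x\<in>A \<union> B. x) mod 3 = \<rho>"
    using assms(3-7) fin sum_AB by (auto simp: card_Un_disjoint sum.union_disjoint)
  moreover have "X = (X \<union> A) - (A \<union> B)" using assms(3,4) by blast
  ultimately show ?thesis unfolding diff_family_def by blast
qed

lemma disjoint_residue_complete_pair_in_complement:
  assumes "X \<subseteq> {0..<3 * n}" "1 \<le> card X" "card X + 4 \<le> 2 * n"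
  shows "\<exists>d1 d2. d1 \<le> 2 \<and> d2 \<le> 2 \<and> d2 \<le> card X
    \<and> disjoint_residue_complete_pair ({0..<3 * n} - X) d1 d2"
proof -
  define W where "W = {0..<3 * n} - X"
  have fin: "finite X" "finite W" using assms(1) finite_subset W_def by auto
  show ?thesis
  proof (cases "card X = 1")
    case True
    have "2 \<le> card (residue_class W i)" if "i < 3" for i
    proof -
      have "residue_class {0..<3 * n} i \<subseteq> residue_class W i \<union> X"
        by (auto simp: W_def residue_class_def)
      then have "card (residue_class {0..<3 * n} i) \<le> card (residue_class W i \<union> X)"
        using fin by (intro card_mono) simp_all
      also have "\<dots> \<le> card (residue_class W i) + card X" by (rule card_Un_le)
      finally show ?thesis
        using card_residue_class_atLeastLessThan[OF that] assms(3) True by simp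
    qed
    then have "disjoint_residue_complete_pair W 1 1"
      using disjoint_residue_complete_pair_singletons[OF fin(2)] by blast
    then show ?thesis using True unfolding W_def by (intro exI[of _ 1]) simp
  next
    case False
    have "card W = 3 * n - card X"
      using assms(1) fin by (simp add: W_def card_Diff_subset)
    moreover have "card (residue_class W i) \<le> n" if "i < 3" for i
      using card_mono[of "residue_class {0..<3 * n} i" "residue_class W i"]
        card_residue_class_atLeastLessThan[OF that, of n]
      by (auto simp: W_def residue_class_def)
    ultimately have "card (residue_class W i) + 4 \<le> card W" if "i < 3" for i
      using that assms(3) by fastforce
    then obtain d1 d2 where "d1 \<le> 2" "d2 \<le> 2" "disjoint_residue_complete_pair W d1 d2"
      using disjoint_residue_complete_pair_exists[OF fin(2)] by blast
    moreover have "2 \<le> card X" using False assms(2) by linarith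
    ultimately show ?thesis unfolding W_def by (meson le_trans)
  qed
qed

theorem mainTheorem9:
  fixes k :: nat and X :: "nat set"
  assumes "k \<ge> 6" and "even k" and "k mod 3 = 0"
    and "X \<subseteq> {0..<2*k}" and "1 \<le> card X" and "card X \<le> k - 2"
  shows "X \<in> diff_family {R. R \<subseteq> {0..<2*k} \<and> card R = k \<and> (\<Sum>x\<in>R. x) mod 3 = 1}"
proof -
  define W where "W = {0..<2*k} - X"
  obtain q where k: "k = 3 * q" using assms(3) by auto
  then have "{0..<2*k} = {0..<3 * (2 * q)}" "card X + 4 \<le> 2 * (2 * q)"
    using assms(1,6) by simp_all
  with assms(4,5) obtain d1 d2 where d: "d1 \<le> 2" "d2 \<le> 2" "d2 \<le> card X"
    "disjoint_residue_complete_pair W d1 d2"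
    using disjoint_residue_complete_pair_in_complement[of X "2 * q"] unfolding W_def by auto
  have "finite X" using assms(4) by (rule finite_subset) simp
  then have card_W: "card W = 2 * k - card X"
    using assms(4) by (simp add: W_def card_Diff_subset)
  have size_A: "d1 \<le> k - card X" "k - card X + d2 + 4 \<le> card W"
    and size_AB: "k - card X + card X + 2 \<le> card W"
    using d(1,2) card_W assms(1,6) by linarith+
  from disjoint_subsets_with_residues[OF _ d(4) size_A(1) d(3) size_A(2) size_AB,
      where r = "1 + 2 * \<Sum>X" and s = "\<Sum>X"]
  obtain A B where "A \<subseteq> W" "B \<subseteq> W" "A \<inter> B = {}" "card A = k - card X" "card B = card X"
    "(\<Sum>A) mod 3 = (1 + 2 * \<Sum>X) mod 3" "(\<Sum>B) mod 3 = (\<Sum>X) mod 3"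
    by (auto simp: W_def)
  then show ?thesis
    using diff_family_of_disjoint_completions[of "{0..<2*k}" X A B k 1] assms(4,6)
    unfolding W_def by auto
qed

end
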